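(* Let $1\le p\le n$, $\beta>0$, and $X\in\mathbb{R}^{n\times p}_*$. Let $\mathrm{St}_{X^\top X}=\{Y\in\mathbb{R}^{n\times p}\mid Y^\top Y=X^\top X\}$, whose tangent space at $X$ is $\mathrm{T}_X\mathrm{St}_{X^\top X}=\{\xi\in\mathbb{R}^{n\times p}\mid \xi^\top X+X^\top\xi=0\}$. Define the normal space of $\mathrm{St}_{X^\top X}$ at $X$ with respect to $g^\beta$ as \[\mathrm{N}^\beta_X\mathrm{St}_{X^\top X}=\{U\in\mathbb{R}^{n\times p}\mid g^\beta_X(U,\xi)=0\text{ for all }\xi\in\mathrm{T}_X\mathrm{St}_{X^\top X}\}.\] Then \[\mathrm{N}^\beta_X\mathrm{St}_{X^\top X}=\{X(X^\top X)^{-1}S\mid S\in\mathrm{Sym}(p)\}.\]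
   Context: $\mathbb{R}^{n\times p}_*$ denotes the set of full-rank (rank $p$) real $n\times p$ matrices; $\mathrm{Sym}(p)$ is the set of real symmetric $p\times p$ matrices. For $\beta>0$ and $X\in\mathbb{R}^{n\times p}_*$, the $\beta$-metric is the inner product on $\mathbb{R}^{n\times p}$ given by \[g^\beta_X(\xi,\zeta)=\mathrm{trace}\Big(\xi^\top\big(\mathrm{I}_n-(1-\beta)X(X^\top X)^{-1}X^\top\big)\zeta\,(X^\top X)^{-1}\Big),\qquad \xi,\zeta\in\mathbb{R}^{n\times p}.\] *)

theory Defs
  imports "HOL-Analysis.Analysis"
begin

text \<open>Matrices in R^(n x p) are represented as real^'p^'n (rows indexed by 'n, columns by 'p).\<close>

definition beta_metric :: "real \<Rightarrow> real^'p^'n \<Rightarrow> real^'p^'n \<Rightarrow> real^'p^'n \<Rightarrow> real" where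
  "beta_metric \<beta> X \<xi> \<zeta> =
     trace (transpose \<xi> ** (mat 1 - (1 - \<beta>) *\<^sub>R (X ** matrix_inv (transpose X ** X) ** transpose X))
            ** \<zeta> ** matrix_inv (transpose X ** X))"

definition tangent_St :: "real^'p^'n \<Rightarrow> (real^'p^'n) set" where
  "tangent_St X = {\<xi>. transpose \<xi> ** X + transpose X ** \<xi> = 0}"

definition normal_St :: "real \<Rightarrow> real^'p^'n \<Rightarrow> (real^'p^'n) set" where
  "normal_St \<beta> X = {U. \<forall>\<xi>\<in>tangent_St X. beta_metric \<beta> X U \<xi> = 0}"

definition Sym :: "(real^'p^'p) set" where
  "Sym = {S. transpose S = S}"

end

theory Submission
  imports Defs
begin

text \<open>
  Let \<open>G = X\<^sup>TX\<close> and let \<open>P = XG\<^sup>-\<^sup>1X\<^sup>T\<close> be the orthogonal projector onto the column space of \<open>X\<close>.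
  By the cyclicity of the trace, \<open>g\<^sup>\<beta>\<^sub>X(U,\<xi>) = \<langle>M U G\<^sup>-\<^sup>1, \<xi>\<rangle>\<close> for the Frobenius inner product,
  where \<open>M = I - (1-\<beta>)P\<close> multiplies the column space by \<open>\<beta>\<close> and fixes its orthogonal
  complement. So \<open>U\<close> is \<open>g\<^sup>\<beta>\<close>-normal iff \<open>M U G\<^sup>-\<^sup>1\<close> is Frobenius-orthogonal to the tangent
  space \<open>{\<xi> | X\<^sup>T\<xi> skew}\<close>, i.e. lies in \<open>{XS | S symmetric}\<close>: the component of such a matrix
  orthogonal to the column space is itself tangent, and \<open>XS\<close> is orthogonal to \<open>XG\<^sup>-\<^sup>1K\<close> for
  all skew \<open>K\<close> iff \<open>S\<close> is symmetric. Finally \<open>M\<close> is invertible for \<open>\<beta> \<noteq> 0\<close>, with inverse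
  \<open>I - (1-1/\<beta>)P\<close>, and \<open>U \<mapsto> M U G\<^sup>-\<^sup>1\<close> maps \<open>XG\<^sup>-\<^sup>1S\<close> to \<open>X(\<beta>G\<^sup>-\<^sup>1SG\<^sup>-\<^sup>1)\<close>, so it carries
  \<open>{XG\<^sup>-\<^sup>1S | S symmetric}\<close> onto \<open>{XS | S symmetric}\<close>.
\<close>

lemma matrix_diff_ldistrib: "(A::real^'n^'m) ** (B - C) = A ** B - A ** C"
  by (simp add: matrix_matrix_mult_def vec_eq_iff sum_subtractf algebra_simps)

lemma matrix_diff_rdistrib: "((A::real^'n^'m) - B) ** C = A ** C - B ** C"
  by (simp add: matrix_matrix_mult_def vec_eq_iff sum_subtractf algebra_simps)

lemma transpose_diff: "transpose ((A::real^'n^'m) - B) = transpose A - transpose B"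
  by (simp add: transpose_def vec_eq_iff)

lemma transpose_zero [simp]: "transpose (0::real^'n^'m) = 0"
  by (simp add: transpose_def vec_eq_iff)

lemma transpose_uminus: "transpose (- (A::real^'n^'m)) = - transpose A"
  by (simp add: transpose_def vec_eq_iff)

lemma matrix_inv_right:
  assumes "invertible (A::real^'n^'n)"
  shows "A ** matrix_inv A = mat 1"
  using assms someI_ex[of "\<lambda>A'. A ** A' = mat 1 \<and> A' ** A = mat 1"]
  unfolding invertible_def matrix_inv_def by blast

lemma matrix_inv_left:
  assumes "invertible (A::real^'n^'n)"
  shows "matrix_inv A ** A = mat 1"
  using assms someI_ex[of "\<lambda>A'. A ** A' = mat 1 \<and> A' ** A = mat 1"]
  unfolding invertible_def matrix_inv_def by blast

lemma transpose_matrix_inv_symmetric: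
  assumes "invertible (A::real^'n^'n)" and "transpose A = A"
  shows "transpose (matrix_inv A) = matrix_inv A"
proof -
  have "transpose (matrix_inv A) ** A = mat 1"
    by (metis assms matrix_inv_right matrix_transpose_mul transpose_mat)
  then have "transpose (matrix_inv A) ** (A ** matrix_inv A) = matrix_inv A"
    by (simp add: matrix_mul_assoc)
  then show ?thesis
    by (simp add: matrix_inv_right[OF assms(1)])
qed

lemma invertible_gram:
  fixes X :: "real^'p^'n"
  assumes "rank X = CARD('p)"
  shows "invertible (transpose X ** X)"
proof -
  have "\<forall>x. (transpose X ** X) *v x = 0 \<longrightarrow> x = 0"
  proof (intro allI impI)
    fix x assume "(transpose X ** X) *v x = 0"
    have "inner (X *v x) (X *v x) = inner x ((transpose X ** X) *v x)"
      by (metis dot_lmul_matrix matrix_vector_mul_assoc vector_transpose_matrix)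
    then have "X *v x = 0"
      using \<open>(transpose X ** X) *v x = 0\<close> by simp
    then show "x = 0"
      using full_rank_injective[of X] assms by (metis inj_eq matrix_vector_mult_0_right)
  qed
  then show ?thesis
    by (simp only: invertible_left_inverse matrix_left_invertible_ker)
qed

lemma trace_transpose_mult_eq_inner:
  "trace (transpose A ** B) = inner A (B::real^'p^'n)"
  unfolding trace_def matrix_matrix_mult_def transpose_def inner_vec_def
  by (simp add: sum.swap[of _ "UNIV::'p set"])

lemma inner_transpose: "inner (transpose A) (transpose B) = inner A (B::real^'p^'n)"
  by (metis trace_transpose_mult_eq_inner trace_mul_sym inner_commute transpose_transpose)

lemma inner_matrix_mult_left:
  "inner (A ** B) C = inner B (transpose A ** C)" for A :: "real^'q^'n" and B :: "real^'p^'q"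
  by (simp flip: trace_transpose_mult_eq_inner add: matrix_transpose_mul matrix_mul_assoc)

lemma inner_symmetric_skew_eq_0:
  fixes S K :: "real^'n^'n"
  assumes "transpose S = S" and "transpose K = - K"
  shows "inner S K = 0"
  using inner_transpose[of S K] by (simp add: assms transpose_uminus)

lemma symmetric_if_orthogonal_skew:
  fixes C :: "real^'n^'n"
  assumes "\<And>K. transpose K = - K \<Longrightarrow> inner C K = 0"
  shows "transpose C = C"
proof -
  define K where "K = C - transpose C"
  have skew: "transpose K = - K"
    by (simp add: K_def transpose_diff)
  have "inner K K = inner C K - inner (transpose C) K"
    by (simp add: K_def inner_diff_left)
  also have "inner (transpose C) K = - inner C K"
    using inner_transpose[of C K] by (simp add: skew transpose_uminus)
  finally have "inner K K = 0"
    using assms[OF skew] by simp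
  then show ?thesis
    by (simp add: K_def)
qed

definition col_proj :: "real^'p^'n \<Rightarrow> real^'n^'n" where
  "col_proj X = X ** matrix_inv (transpose X ** X) ** transpose X"

definition col_space_scaling :: "real \<Rightarrow> real^'p^'n \<Rightarrow> real^'n^'n" where
  "col_space_scaling \<beta> X = mat 1 - (1 - \<beta>) *\<^sub>R col_proj X"

lemma col_space_scaling_1 [simp]: "col_space_scaling 1 X = mat 1"
  by (simp add: col_space_scaling_def)

lemma tangent_St_iff: "\<xi> \<in> tangent_St X \<longleftrightarrow> transpose (transpose X ** \<xi>) = - (transpose X ** \<xi>)"
  by (simp add: tangent_St_def matrix_transpose_mul eq_neg_iff_add_eq_0)

context
  fixes X :: "real^'p^'n"
  assumes rank_X: "rank X = CARD('p)"
begin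

lemma mult_gram_inv_gram: "A ** matrix_inv (transpose X ** X) ** transpose X ** X = A"
  by (metis matrix_inv_left[OF invertible_gram[OF rank_X]] matrix_mul_assoc matrix_mul_rid)

lemma gram_mult_gram_inv: "transpose X ** X ** matrix_inv (transpose X ** X) = mat 1"
  by (rule matrix_inv_right[OF invertible_gram[OF rank_X]])

lemma transpose_gram_inv: "transpose (matrix_inv (transpose X ** X)) = matrix_inv (transpose X ** X)"
  by (rule transpose_matrix_inv_symmetric[OF invertible_gram[OF rank_X]])
     (simp add: matrix_transpose_mul)

lemma transpose_col_proj: "transpose (col_proj X) = col_proj X"
  by (simp add: col_proj_def matrix_transpose_mul transpose_gram_inv matrix_mul_assoc)

lemma col_proj_mult_self: "col_proj X ** X = X"
  by (simp add: col_proj_def mult_gram_inv_gram)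

lemma transpose_self_mult_col_proj: "transpose X ** col_proj X = transpose X"
  by (metis col_proj_mult_self matrix_transpose_mul transpose_col_proj)

lemma col_proj_idem: "col_proj X ** col_proj X = col_proj X"
  by (metis col_proj_def col_proj_mult_self matrix_mul_assoc)

lemma orthogonal_tangent_St_in_col_space:
  assumes "\<forall>\<xi>\<in>tangent_St X. inner B \<xi> = 0"
  shows "col_proj X ** B = B"
proof -
  define P where "P = col_proj X"
  have "B - P ** B \<in> tangent_St X"
    unfolding tangent_St_iff
    by (simp add: P_def matrix_diff_ldistrib matrix_mul_assoc transpose_self_mult_col_proj)
  then have "inner B (B - P ** B) = 0"
    using assms by blast
  moreover have "inner (P ** B) (B - P ** B) = 0"
    by (simp add: inner_matrix_mult_left matrix_diff_ldistrib matrix_mul_assoc P_def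
        transpose_col_proj col_proj_idem)
  ultimately have "inner (B - P ** B) (B - P ** B) = 0"
    by (simp add: inner_diff_left)
  then show ?thesis
    by (simp add: P_def)
qed

lemma orthogonal_tangent_St: "{B. \<forall>\<xi>\<in>tangent_St X. inner B \<xi> = 0} = {X ** S | S. S \<in> Sym}"
proof (intro set_eqI iffI)
  fix B assume "B \<in> {B. \<forall>\<xi>\<in>tangent_St X. inner B \<xi> = 0}"
  then have orth: "\<forall>\<xi>\<in>tangent_St X. inner B \<xi> = 0"
    by simp
  define Gi where "Gi = matrix_inv (transpose X ** X)"
  define C where "C = Gi ** transpose X ** B"
  have B_eq: "B = X ** C"
    using orthogonal_tangent_St_in_col_space[OF orth]
    by (simp add: C_def Gi_def col_proj_def matrix_mul_assoc)
  have "inner C K = 0" if skew: "transpose K = - K" for K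
  proof -
    have "X ** Gi ** K \<in> tangent_St X"
      unfolding tangent_St_iff
      by (simp add: matrix_mul_assoc Gi_def gram_mult_gram_inv skew)
    then have "inner B (X ** Gi ** K) = 0"
      using orth by blast
    moreover have "transpose X ** (X ** Gi ** K) = K"
      by (simp add: Gi_def matrix_mul_assoc gram_mult_gram_inv)
    ultimately show ?thesis
      by (simp add: B_eq inner_matrix_mult_left)
  qed
  then have "C \<in> Sym"
    unfolding Sym_def by (blast intro: symmetric_if_orthogonal_skew)
  then show "B \<in> {X ** S | S. S \<in> Sym}"
    using B_eq by blast
next
  fix B assume "B \<in> {X ** S | S. S \<in> Sym}"
  then obtain S where "B = X ** S" and "transpose S = S"
    unfolding Sym_def by blast
  have "inner B \<xi> = 0" if "\<xi> \<in> tangent_St X" for \<xi>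
  proof -
    have "inner B \<xi> = inner S (transpose X ** \<xi>)"
      by (simp add: \<open>B = X ** S\<close> inner_matrix_mult_left)
    also have "\<dots> = 0"
      using that \<open>transpose S = S\<close> unfolding tangent_St_iff by (rule inner_symmetric_skew_eq_0[rotated])
    finally show ?thesis .
  qed
  then show "B \<in> {B. \<forall>\<xi>\<in>tangent_St X. inner B \<xi> = 0}"
    by blast
qed

lemma transpose_col_space_scaling: "transpose (col_space_scaling \<beta> X) = col_space_scaling \<beta> X"
  by (simp add: col_space_scaling_def transpose_diff transpose_scalar transpose_col_proj)

lemma col_space_scaling_mult_self: "col_space_scaling \<beta> X ** X = \<beta> *\<^sub>R X"
  by (simp add: col_space_scaling_def matrix_diff_rdistrib col_proj_mult_self
      flip: scalar_matrix_assoc) (simp add: algebra_simps)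

lemma col_space_scaling_mult:
  "col_space_scaling a X ** col_space_scaling b X = col_space_scaling (a * b) X"
  by (simp add: col_space_scaling_def matrix_diff_ldistrib matrix_diff_rdistrib matrix_scalar_ac
      col_proj_idem flip: scalar_matrix_assoc) (simp add: algebra_simps)

lemma beta_metric_eq_inner:
  "beta_metric \<beta> X U \<xi> = inner (col_space_scaling \<beta> X ** U ** matrix_inv (transpose X ** X)) \<xi>"
proof -
  let ?M = "col_space_scaling \<beta> X" and ?Gi = "matrix_inv (transpose X ** X)"
  have "beta_metric \<beta> X U \<xi> = trace ((transpose U ** ?M ** \<xi>) ** ?Gi)"
    by (simp add: beta_metric_def col_space_scaling_def col_proj_def)
  also have "\<dots> = trace (?Gi ** (transpose U ** ?M ** \<xi>))"
    by (rule trace_mul_sym)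
  also have "\<dots> = trace (transpose (?M ** U ** ?Gi) ** \<xi>)"
    by (simp add: matrix_transpose_mul transpose_col_space_scaling transpose_gram_inv
        matrix_mul_assoc)
  finally show ?thesis
    by (simp add: trace_transpose_mult_eq_inner)
qed

lemma col_space_scaling_mem_Sym_iff:
  assumes "\<beta> \<noteq> 0"
  shows "col_space_scaling \<beta> X ** U ** matrix_inv (transpose X ** X) \<in> {X ** S | S. S \<in> Sym}
    \<longleftrightarrow> U \<in> {X ** matrix_inv (transpose X ** X) ** S | S. S \<in> Sym}"
proof
  let ?M = "col_space_scaling \<beta> X" and ?G = "transpose X ** X" and ?Gi = "matrix_inv (transpose X ** X)"
  assume "?M ** U ** ?Gi \<in> {X ** S | S. S \<in> Sym}"
  then obtain S where MU: "?M ** U ** ?Gi = X ** S" and "transpose S = S"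
    unfolding Sym_def by blast
  have "U = col_space_scaling (1 / \<beta>) X ** (?M ** U ** ?Gi) ** transpose X ** X"
    using assms by (simp add: matrix_mul_assoc col_space_scaling_mult mult_gram_inv_gram)
  also have "\<dots> = X ** ?Gi ** ((1 / \<beta>) *\<^sub>R (?G ** S ** ?G))"
    unfolding MU
    by (simp add: matrix_mul_assoc col_space_scaling_mult_self matrix_scalar_ac
        mult_gram_inv_gram flip: scalar_matrix_assoc)
  finally have "U = X ** ?Gi ** ((1 / \<beta>) *\<^sub>R (?G ** S ** ?G))" .
  moreover have "(1 / \<beta>) *\<^sub>R (?G ** S ** ?G) \<in> Sym"
    by (simp add: Sym_def transpose_scalar matrix_transpose_mul \<open>transpose S = S\<close> matrix_mul_assoc)
  ultimately show "U \<in> {X ** ?Gi ** S | S. S \<in> Sym}"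
    by blast
next
  let ?M = "col_space_scaling \<beta> X" and ?Gi = "matrix_inv (transpose X ** X)"
  assume "U \<in> {X ** ?Gi ** S | S. S \<in> Sym}"
  then obtain S where U: "U = X ** ?Gi ** S" and "transpose S = S"
    unfolding Sym_def by blast
  have "?M ** U ** ?Gi = X ** (\<beta> *\<^sub>R (?Gi ** S ** ?Gi))"
    by (simp add: U matrix_mul_assoc col_space_scaling_mult_self matrix_scalar_ac
        flip: scalar_matrix_assoc)
  moreover have "\<beta> *\<^sub>R (?Gi ** S ** ?Gi) \<in> Sym"
    by (simp add: Sym_def transpose_scalar matrix_transpose_mul \<open>transpose S = S\<close>
        transpose_gram_inv matrix_mul_assoc)
  ultimately show "?M ** U ** ?Gi \<in> {X ** S | S. S \<in> Sym}"
    by blast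
qed

end

theorem proposition3:
  fixes X :: "real^'p^'n" and \<beta> :: real
  assumes "CARD('p) \<le> CARD('n)"
    and "\<beta> > 0"
    and "rank X = CARD('p)"
  shows "normal_St \<beta> X = {X ** matrix_inv (transpose X ** X) ** S | S. S \<in> Sym}"
proof -
  \<comment> \<open>\<open>CARD('p) \<le> CARD('n)\<close> is implied by the rank condition, and only \<open>\<beta> \<noteq> 0\<close> is needed.\<close>
  let ?M = "col_space_scaling \<beta> X" and ?Gi = "matrix_inv (transpose X ** X)"
  have "normal_St \<beta> X = {U. ?M ** U ** ?Gi \<in> {B. \<forall>\<xi>\<in>tangent_St X. inner B \<xi> = 0}}"
    by (simp add: normal_St_def beta_metric_eq_inner[OF assms(3)])
  also have "\<dots> = {U. ?M ** U ** ?Gi \<in> {X ** S | S. S \<in> Sym}}"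
    by (simp only: orthogonal_tangent_St[OF assms(3)])
  also have "\<dots> = {X ** ?Gi ** S | S. S \<in> Sym}"
    using col_space_scaling_mem_Sym_iff[OF assms(3)] assms(2) by auto
  finally show ?thesis .
qed

end
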